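(* Let $\Omega\subseteq\mathbb{R}^N$ be open and bounded, $\sigma(x):=\mathrm{dist}(x,\partial\Omega)$, and let $\eta\in C^\infty(\Omega)$ be such that there exists $0<\kappa<1$ with $\kappa\sigma(x)^2\le\eta(x)\le\sigma(x)^2$ for every $x\in\Omega$. Let $T_n$ be as in the context. Then for every $f\in L^1(\Omega)$, $T_nf\to f$ in $L^1(\Omega)$ as $n\to\infty$.
   Context: $\rho\in C_c^\infty(\mathbb{R}^N)$ satisfies $0\le\rho\le1$, $\rho(x)=0$ iff $|x|\ge1$, $\rho$ is radially symmetric, and $\rho(x)\ge\rho(1/2)$ for all $|x|<1/2$. Set $M_\rho:=(\int_{B_1(0)}\rho(y)\,dy)^{-1}$. For $x\in\Omega$ and $n\in\mathbb{N}$ let $C_n(x):=M_\rho n^N/\eta(x)^N$, and for $f\in L^1_{loc}(\Omega)$ let $T_nf(x):=C_n(x)\int_\Omega\rho\big(\frac{x-y}{\frac1n\eta(x)}\big)f(y)\,dy$. *)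

theory Defs
  imports "HOL-Analysis.Analysis"
begin

text \<open>C-infinity on an open set S: all iterated Frechet derivatives exist.
  D vs x is the iterated derivative of f at x applied to the directions in vs
  (most recently differentiated direction first).\<close>
definition smooth_on :: "'a::euclidean_space set \<Rightarrow> ('a \<Rightarrow> real) \<Rightarrow> bool" where
  "smooth_on S f \<longleftrightarrow>
     (\<exists>D :: 'a list \<Rightarrow> 'a \<Rightarrow> real.
        (\<forall>x\<in>S. D [] x = f x) \<and>
        (\<forall>vs. \<forall>x\<in>S. (D vs has_derivative (\<lambda>h. D (h # vs) x)) (at x)))"

definition M_rho :: "('a::euclidean_space \<Rightarrow> real) \<Rightarrow> real" where
  "M_rho \<rho> = 1 / (LINT y : ball 0 1 | lebesgue. \<rho> y)"

definition C_n :: "('a::euclidean_space \<Rightarrow> real) \<Rightarrow> ('a \<Rightarrow> real) \<Rightarrow> nat \<Rightarrow> 'a \<Rightarrow> real" where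
  "C_n \<rho> \<eta> n x = M_rho \<rho> * real n ^ DIM('a) / \<eta> x ^ DIM('a)"

definition T_n :: "('a::euclidean_space \<Rightarrow> real) \<Rightarrow> 'a set \<Rightarrow> ('a \<Rightarrow> real) \<Rightarrow> nat
                    \<Rightarrow> ('a \<Rightarrow> real) \<Rightarrow> 'a \<Rightarrow> real" where
  "T_n \<rho> \<Omega> \<eta> n f x =
     C_n \<rho> \<eta> n x * (LINT y : \<Omega> | lebesgue. \<rho> ((real n / \<eta> x) *\<^sub>R (x - y)) * f y)"

end

theory Submission
  imports Defs
begin

text \<open>
  Write \<open>T\<^sub>n f x = \<integral> K\<^sub>n x y f y dy\<close> with \<open>K\<^sub>n x y = C\<^sub>n x \<rho> (n (x - y) / \<eta> x)\<close>.
  Every row \<open>K\<^sub>n x\<close> has integral 1 and, once \<open>n > 2 diam \<Omega>\<close>, is supported in the ball of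
  radius \<open>\<sigma> x\<^sup>2 / n < \<sigma> x / 2\<close> around \<open>x\<close>, hence inside \<open>\<Omega>\<close>. On that ball \<open>\<sigma>\<close> is
  comparable to \<open>\<sigma> x\<close>, so \<open>\<eta> x \<ge> \<kappa> \<sigma> y\<^sup>2 / 4\<close> whenever \<open>K\<^sub>n x y \<noteq> 0\<close>, and every column
  \<open>K\<^sub>n \<cdot> y\<close> has integral at most \<open>M\<^sub>\<rho> (16 / \<kappa>)\<^sup>N |B\<^sub>1|\<close>. By Tonelli (Schur's test) the
  operators \<open>T\<^sub>n\<close> are then uniformly bounded on \<open>L\<^sup>1(\<Omega>)\<close>; for continuous \<open>g\<close> the
  shrinking supports give \<open>T\<^sub>n g \<rightarrow> g\<close> uniformly on \<open>\<Omega>\<close>; and continuous functions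
  are dense in \<open>L\<^sup>1\<close>.
\<close>

lemma sigma_finite_lebesgue: "sigma_finite_measure (lebesgue :: 'a::euclidean_space measure)"
proof
  obtain A :: "'a set set" where "countable A" "A \<subseteq> sets lborel" "\<Union>A = space lborel"
    "\<forall>a\<in>A. emeasure lborel a \<noteq> \<infinity>"
    using lborel.sigma_finite_countable by blast
  then show "\<exists>A. countable A \<and> A \<subseteq> sets (lebesgue :: 'a measure) \<and> \<Union>A = space lebesgue \<and>
      (\<forall>a\<in>A. emeasure lebesgue a \<noteq> \<infinity>)"
    by (intro exI[of _ A]) (auto simp: emeasure_completion)
qed

interpretation lebesgue_pair: pair_sigma_finite "lebesgue :: 'a::euclidean_space measure"
  "lebesgue :: 'b::euclidean_space measure"
  by (simp add: pair_sigma_finite_def sigma_finite_lebesgue)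

lemma borel_measurable_lebesgue_pair:
  fixes f :: "'a::euclidean_space \<times> 'b::euclidean_space \<Rightarrow> 'c::topological_space"
  assumes "f \<in> borel_measurable (lborel \<Otimes>\<^sub>M lborel)"
  shows "f \<in> borel_measurable (lebesgue \<Otimes>\<^sub>M lebesgue)"
proof -
  have id_a: "(\<lambda>x. x) \<in> lebesgue \<rightarrow>\<^sub>M (lborel :: 'a measure)"
    by (rule measurable_completion) simp
  have id_b: "(\<lambda>x. x) \<in> lebesgue \<rightarrow>\<^sub>M (lborel :: 'b measure)"
    by (rule measurable_completion) simp
  have fst: "fst \<in> (lebesgue \<Otimes>\<^sub>M lebesgue) \<rightarrow>\<^sub>M (lborel :: 'a measure)"
    using measurable_compose[OF measurable_fst id_a] by (simp add: comp_def)
  have snd: "snd \<in> (lebesgue \<Otimes>\<^sub>M lebesgue) \<rightarrow>\<^sub>M (lborel :: 'b measure)"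
    using measurable_compose[OF measurable_snd id_b] by (simp add: comp_def)
  have "(\<lambda>p. p) \<in> (lebesgue \<Otimes>\<^sub>M lebesgue) \<rightarrow>\<^sub>M (lborel \<Otimes>\<^sub>M lborel :: ('a \<times> 'b) measure)"
    using fst snd by (simp add: measurable_pair_iff comp_def)
  from measurable_comp[OF this assms] show ?thesis
    by (simp add: comp_def)
qed

lemma integrable_mult_bounded_left:
  fixes k h :: "'a \<Rightarrow> real"
  assumes h: "integrable M h" and k: "k \<in> borel_measurable M" and bound: "\<And>y. \<bar>k y\<bar> \<le> C"
  shows "integrable M (\<lambda>y. k y * h y)"
proof (rule Bochner_Integration.integrable_bound[of M "\<lambda>y. C * h y"])
  show "integrable M (\<lambda>y. C * h y)" using h by simp
  show "(\<lambda>y. k y * h y) \<in> borel_measurable M" using h k by measurable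
  show "AE y in M. norm (k y * h y) \<le> norm (C * h y)"
  proof (intro AE_I2)
    fix y
    have "\<bar>k y\<bar> \<le> \<bar>C\<bar>" using bound[of y] by linarith
    then show "norm (k y * h y) \<le> norm (C * h y)" by (simp add: abs_mult mult_right_mono)
  qed
qed

lemma weighted_average_deviation:
  fixes k g :: "'a \<Rightarrow> real"
  assumes k_nonneg: "\<And>y. 0 \<le> k y" and k: "integrable M k" "(\<integral>y. k y \<partial>M) = 1"
    and kg: "integrable M (\<lambda>y. k y * g y)"
    and close: "\<And>y. k y \<noteq> 0 \<Longrightarrow> \<bar>g y - c\<bar> \<le> e"
  shows "\<bar>(\<integral>y. k y * g y \<partial>M) - c\<bar> \<le> e"
proof -
  have dev: "integrable M (\<lambda>y. k y * (g y - c))"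
    using kg k by (simp add: right_diff_distrib)
  have "(\<integral>y. k y * g y \<partial>M) - c = (\<integral>y. k y * (g y - c) \<partial>M)"
    using kg k by (simp add: right_diff_distrib)
  also have "\<bar>\<dots>\<bar> \<le> (\<integral>y. \<bar>k y * (g y - c)\<bar> \<partial>M)"
    by (rule integral_abs_bound)
  also have "\<dots> \<le> (\<integral>y. k y * e \<partial>M)"
  proof (rule integral_mono)
    show "\<bar>k y * (g y - c)\<bar> \<le> k y * e" for y
      using close[of y] k_nonneg[of y]
      by (cases "k y = 0") (auto simp: abs_mult intro: mult_left_mono)
  qed (use dev k in auto)
  also have "\<dots> = e" using k by simp
  finally show ?thesis .
qed

lemma (in pair_sigma_finite) nn_integral_integral_operator_le:
  fixes K :: "'a \<Rightarrow> 'b \<Rightarrow> real" and h :: "'b \<Rightarrow> real"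
  assumes K_nonneg: "\<And>x y. 0 \<le> K x y"
    and K_meas: "(\<lambda>(x, y). K x y) \<in> borel_measurable (M1 \<Otimes>\<^sub>M M2)"
    and h: "h \<in> borel_measurable M2"
    and column: "\<And>y. y \<in> space M2 \<Longrightarrow> (\<integral>\<^sup>+x. K x y \<partial>M1) \<le> ennreal B"
  shows "(\<integral>\<^sup>+x. \<bar>\<integral>y. K x y * h y \<partial>M2\<bar> \<partial>M1) \<le> ennreal B * (\<integral>\<^sup>+y. \<bar>h y\<bar> \<partial>M2)"
proof -
  have Kh_meas: "(\<lambda>(x, y). ennreal (K x y) * ennreal \<bar>h y\<bar>) \<in> borel_measurable (M1 \<Otimes>\<^sub>M M2)"
    using K_meas h by measurable
  have pointwise:
    "ennreal \<bar>\<integral>y. K x y * h y \<partial>M2\<bar> \<le> (\<integral>\<^sup>+y. ennreal (K x y) * ennreal \<bar>h y\<bar> \<partial>M2)" for x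
  proof (cases "integrable M2 (\<lambda>y. K x y * h y)")
    case True
    have "ennreal \<bar>\<integral>y. K x y * h y \<partial>M2\<bar> \<le> (\<integral>\<^sup>+y. norm (K x y * h y) \<partial>M2)"
      using integral_norm_bound_ennreal[OF True] by simp
    also have "\<dots> = (\<integral>\<^sup>+y. ennreal (K x y) * ennreal \<bar>h y\<bar> \<partial>M2)"
      using K_nonneg by (simp add: abs_mult ennreal_mult)
    finally show ?thesis .
  qed (simp add: not_integrable_integral_eq)
  have "(\<integral>\<^sup>+x. \<bar>\<integral>y. K x y * h y \<partial>M2\<bar> \<partial>M1)
      \<le> (\<integral>\<^sup>+x. \<integral>\<^sup>+y. ennreal (K x y) * ennreal \<bar>h y\<bar> \<partial>M2 \<partial>M1)"
    by (intro nn_integral_mono pointwise)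
  also have "\<dots> = (\<integral>\<^sup>+y. \<integral>\<^sup>+x. ennreal (K x y) * ennreal \<bar>h y\<bar> \<partial>M1 \<partial>M2)"
    using Fubini'[OF Kh_meas] by simp
  also have "\<dots> = (\<integral>\<^sup>+y. (\<integral>\<^sup>+x. K x y \<partial>M1) * ennreal \<bar>h y\<bar> \<partial>M2)"
    using K_meas by (intro nn_integral_cong nn_integral_multc) (auto intro: measurable_Pair1)
  also have "\<dots> \<le> (\<integral>\<^sup>+y. ennreal B * ennreal \<bar>h y\<bar> \<partial>M2)"
    by (intro nn_integral_mono mult_right_mono column) auto
  also have "\<dots> = ennreal B * (\<integral>\<^sup>+y. \<bar>h y\<bar> \<partial>M2)"
    using h by (intro nn_integral_cmult) measurable
  finally show ?thesis .
qed

section \<open>Continuous functions are dense in \<open>L\<^sup>1\<close>\<close>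

lemma integrable_lmeasurable_indicator:
  "S \<in> lmeasurable \<Longrightarrow> integrable lebesgue (indicator S :: 'a::euclidean_space \<Rightarrow> real)"
  unfolding fmeasurable_def by (intro integrable_real_indicator) auto

lemma integral_abs_diff_triangle:
  fixes f g h :: "'a \<Rightarrow> real"
  assumes "integrable M f" "integrable M g" "integrable M h"
  shows "(\<integral>x. \<bar>f x - h x\<bar> \<partial>M) \<le> (\<integral>x. \<bar>f x - g x\<bar> \<partial>M) + (\<integral>x. \<bar>g x - h x\<bar> \<partial>M)"
proof -
  have "(\<integral>x. \<bar>f x - h x\<bar> \<partial>M) \<le> (\<integral>x. \<bar>f x - g x\<bar> + \<bar>g x - h x\<bar> \<partial>M)"
    using assms by (intro integral_mono) auto
  also have "\<dots> = (\<integral>x. \<bar>f x - g x\<bar> \<partial>M) + (\<integral>x. \<bar>g x - h x\<bar> \<partial>M)"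
    using assms by (intro Bochner_Integration.integral_add) auto
  finally show ?thesis .
qed

lemma lebesgue_closed_open_approx:
  fixes A :: "'a::euclidean_space set"
  assumes A: "A \<in> sets lebesgue" "emeasure lebesgue A < \<infinity>" and e: "0 < e"
  obtains C U where "closed C" "open U" "C \<subseteq> A" "A \<subseteq> U" "U \<in> lmeasurable"
    "measure lebesgue (U - C) < e"
proof -
  obtain C where C: "closed C" "C \<subseteq> A" "A - C \<in> lmeasurable"
    "emeasure lebesgue (A - C) < ennreal (e / 2)"
    using sets_lebesgue_inner_closed[OF A(1)] e by (metis half_gt_zero)
  obtain U where U: "open U" "A \<subseteq> U" "U - A \<in> lmeasurable"
    "emeasure lebesgue (U - A) < ennreal (e / 2)"
    using sets_lebesgue_outer_open[OF A(1)] e by (metis half_gt_zero)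
  have "A \<in> lmeasurable"
    using A by (simp add: fmeasurable_def)
  then have U_fin: "U \<in> lmeasurable"
    using fmeasurable.Un[OF _ U(3)] U(2) by (metis Diff_partition)
  have "U - C \<subseteq> (U - A) \<union> (A - C)"
    by blast
  then have "measure lebesgue (U - C) \<le> measure lebesgue ((U - A) \<union> (A - C))"
    using C(1,3) U(1,3) by (intro measure_mono_fmeasurable fmeasurable.Un) auto
  also have "\<dots> \<le> measure lebesgue (U - A) + measure lebesgue (A - C)"
    using C(3) U(3) by (intro measure_Un_le) auto
  also have "\<dots> < e"
    using C(3,4) U(3,4) e by (simp add: emeasure_eq_measure2 ennreal_less_iff)
  finally show ?thesis
    using that C(1,2) U(1,2) U_fin by blast
qed

definition L1_approximable :: "('a::euclidean_space \<Rightarrow> real) \<Rightarrow> bool" where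
  "L1_approximable f \<longleftrightarrow>
    (\<forall>e>0. \<exists>g. continuous_on UNIV g \<and> integrable lebesgue g \<and> (\<integral>x. \<bar>f x - g x\<bar> \<partial>lebesgue) < e)"

lemma Urysohn_indicator_approx:
  fixes A :: "'a::euclidean_space set"
  assumes CU: "closed C" "open U" "C \<subseteq> A" "A \<subseteq> U" "U \<in> lmeasurable"
  obtains \<phi> :: "'a \<Rightarrow> real" where "continuous_on UNIV \<phi>" "integrable lebesgue \<phi>"
    "\<And>x. \<bar>indicator A x - \<phi> x\<bar> \<le> indicator (U - C) x"
proof -
  obtain \<phi> :: "'a \<Rightarrow> real" where \<phi>: "continuous_on UNIV \<phi>" "\<And>x. \<phi> x \<in> closed_segment 1 0"
    "\<And>x. x \<in> C \<Longrightarrow> \<phi> x = 1" "\<And>x. x \<in> - U \<Longrightarrow> \<phi> x = 0"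
    using Urysohn[of C "- U" 1 0] CU(1-4) by blast
  have \<phi>_range: "0 \<le> \<phi> x \<and> \<phi> x \<le> 1" for x
    using \<phi>(2)[of x] by (simp add: closed_segment_eq_real_ivl)
  have "integrable lebesgue \<phi>"
  proof (rule Bochner_Integration.integrable_bound[of _ "indicator U"])
    show "\<phi> \<in> borel_measurable lebesgue"
      using \<phi>(1) by (simp add: borel_measurable_continuous_onI measurable_completion)
    show "AE x in lebesgue. norm (\<phi> x) \<le> norm (indicator U x :: real)"
      using \<phi>(4) \<phi>_range by (intro AE_I2) (auto simp: indicator_def)
  qed (use integrable_lmeasurable_indicator[OF CU(5)] in simp)
  moreover have "\<bar>indicator A x - \<phi> x\<bar> \<le> indicator (U - C) x" for x
    using \<phi>(3)[of x] \<phi>(4)[of x] \<phi>_range[of x] CU(3,4) by (auto simp: indicator_def)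
  ultimately show ?thesis
    using that \<phi>(1) by blast
qed

lemma L1_approximable_indicator:
  fixes A :: "'a::euclidean_space set"
  assumes A: "A \<in> sets lebesgue" "emeasure lebesgue A < \<infinity>"
  shows "L1_approximable (\<lambda>x. indicator A x *\<^sub>R c)"
  unfolding L1_approximable_def
proof (intro allI impI)
  fix e :: real assume e: "0 < e"
  obtain C U where CU: "closed C" "open U" "C \<subseteq> A" "A \<subseteq> U" "U \<in> lmeasurable"
    "measure lebesgue (U - C) < e / (\<bar>c\<bar> + 1)"
    using lebesgue_closed_open_approx[OF A, of "e / (\<bar>c\<bar> + 1)"] e by auto
  obtain \<phi> :: "'a \<Rightarrow> real" where \<phi>: "continuous_on UNIV \<phi>" "integrable lebesgue \<phi>"
    "\<And>x. \<bar>indicator A x - \<phi> x\<bar> \<le> indicator (U - C) x"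
    using Urysohn_indicator_approx[OF CU(1-5)] by blast
  have fin: "A \<in> lmeasurable" "U - C \<in> lmeasurable"
    using CU A(1) by (auto intro: fmeasurableI2 fmeasurable_Diff)
  have "(\<integral>x. \<bar>indicator A x *\<^sub>R c - c * \<phi> x\<bar> \<partial>lebesgue) \<le> (\<integral>x. \<bar>c\<bar> * indicator (U - C) x \<partial>lebesgue)"
  proof (rule integral_mono)
    fix x
    have "indicator A x *\<^sub>R c - c * \<phi> x = c * (indicator A x - \<phi> x)"
      by (simp add: algebra_simps)
    then show "\<bar>indicator A x *\<^sub>R c - c * \<phi> x\<bar> \<le> \<bar>c\<bar> * indicator (U - C) x"
      using \<phi>(3)[of x] by (simp add: abs_mult mult_left_mono)
  qed (use \<phi>(2) integrable_lmeasurable_indicator[OF fin(1)]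
      integrable_lmeasurable_indicator[OF fin(2)] in auto)
  also have "\<dots> = \<bar>c\<bar> * measure lebesgue (U - C)"
    using fin(2) by simp
  also have "\<dots> \<le> \<bar>c\<bar> * (e / (\<bar>c\<bar> + 1))"
    using CU(6) by (intro mult_left_mono) auto
  also have "\<dots> < e"
    using e by (simp add: field_simps)
  finally show "\<exists>g. continuous_on UNIV g \<and> integrable lebesgue g \<and>
      (\<integral>x. \<bar>indicator A x *\<^sub>R c - g x\<bar> \<partial>lebesgue) < e"
    using \<phi>(1,2) by (intro exI[of _ "\<lambda>x. c * \<phi> x"]) (auto intro: continuous_intros)
qed

lemma L1_approximable_add:
  assumes "integrable lebesgue f\<^sub>1" "L1_approximable f\<^sub>1"
    and "integrable lebesgue f\<^sub>2" "L1_approximable f\<^sub>2"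
  shows "L1_approximable (\<lambda>x. f\<^sub>1 x + f\<^sub>2 x)"
  unfolding L1_approximable_def
proof (intro allI impI)
  fix e :: real assume "0 < e"
  then obtain g\<^sub>1 g\<^sub>2 where g\<^sub>1: "continuous_on UNIV g\<^sub>1" "integrable lebesgue g\<^sub>1"
      "(\<integral>x. \<bar>f\<^sub>1 x - g\<^sub>1 x\<bar> \<partial>lebesgue) < e / 2"
    and g\<^sub>2: "continuous_on UNIV g\<^sub>2" "integrable lebesgue g\<^sub>2"
      "(\<integral>x. \<bar>f\<^sub>2 x - g\<^sub>2 x\<bar> \<partial>lebesgue) < e / 2"
    using assms(2,4) half_gt_zero unfolding L1_approximable_def by blast
  have "(\<integral>x. \<bar>f\<^sub>1 x + f\<^sub>2 x - (g\<^sub>1 x + g\<^sub>2 x)\<bar> \<partial>lebesgue)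
      \<le> (\<integral>x. \<bar>f\<^sub>1 x - g\<^sub>1 x\<bar> + \<bar>f\<^sub>2 x - g\<^sub>2 x\<bar> \<partial>lebesgue)"
    using assms(1,3) g\<^sub>1(2) g\<^sub>2(2) by (intro integral_mono) auto
  also have "\<dots> = (\<integral>x. \<bar>f\<^sub>1 x - g\<^sub>1 x\<bar> \<partial>lebesgue) + (\<integral>x. \<bar>f\<^sub>2 x - g\<^sub>2 x\<bar> \<partial>lebesgue)"
    using assms(1,3) g\<^sub>1(2) g\<^sub>2(2) by (intro Bochner_Integration.integral_add) auto
  also have "\<dots> < e"
    using g\<^sub>1(3) g\<^sub>2(3) by simp
  finally show "\<exists>g. continuous_on UNIV g \<and> integrable lebesgue g \<and>
      (\<integral>x. \<bar>f\<^sub>1 x + f\<^sub>2 x - g x\<bar> \<partial>lebesgue) < e"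
    using g\<^sub>1(1,2) g\<^sub>2(1,2) by (intro exI[of _ "\<lambda>x. g\<^sub>1 x + g\<^sub>2 x"]) (auto intro: continuous_intros)
qed

lemma L1_approximable_limit:
  assumes s: "\<And>i. integrable lebesgue (s i)" "\<And>i. L1_approximable (s i)"
    and lim: "\<And>x. (\<lambda>i. s i x) \<longlonglongrightarrow> f x" and bound: "\<And>i x. \<bar>s i x\<bar> \<le> 2 * \<bar>f x\<bar>"
    and f: "integrable lebesgue f"
  shows "L1_approximable f"
  unfolding L1_approximable_def
proof (intro allI impI)
  fix e :: real assume e: "0 < e"
  have "(\<lambda>i. \<integral>x. \<bar>f x - s i x\<bar> \<partial>lebesgue) \<longlonglongrightarrow> integral\<^sup>L lebesgue (\<lambda>x::'a. 0)"
  proof (rule integral_dominated_convergence[where w = "\<lambda>x. 3 * \<bar>f x\<bar>"])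
    show "AE x in lebesgue. (\<lambda>i. \<bar>f x - s i x\<bar>) \<longlonglongrightarrow> 0"
    proof (intro AE_I2)
      fix x
      have "(\<lambda>i. \<bar>f x - s i x\<bar>) \<longlonglongrightarrow> \<bar>f x - f x\<bar>"
        using lim[of x] by (intro tendsto_rabs tendsto_diff tendsto_const)
      then show "(\<lambda>i. \<bar>f x - s i x\<bar>) \<longlonglongrightarrow> 0" by simp
    qed
    show "AE x in lebesgue. norm \<bar>f x - s i x\<bar> \<le> 3 * \<bar>f x\<bar>" for i
    proof (intro AE_I2)
      fix x
      have "\<bar>f x - s i x\<bar> \<le> \<bar>f x\<bar> + \<bar>s i x\<bar>"
        by (rule abs_triangle_ineq4)
      then show "norm \<bar>f x - s i x\<bar> \<le> 3 * \<bar>f x\<bar>"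
        using bound[of i x] by simp
    qed
  qed (use s(1) f in auto)
  then obtain i where i: "(\<integral>x. \<bar>f x - s i x\<bar> \<partial>lebesgue) < e / 2"
    using order_tendstoD(2)[of _ 0 sequentially "e / 2"] e by (auto simp: eventually_sequentially)
  obtain g where g: "continuous_on UNIV g" "integrable lebesgue g"
    "(\<integral>x. \<bar>s i x - g x\<bar> \<partial>lebesgue) < e / 2"
    using s(2) e half_gt_zero unfolding L1_approximable_def by blast
  have "(\<integral>x. \<bar>f x - g x\<bar> \<partial>lebesgue) < e"
    using integral_abs_diff_triangle[OF f s(1) g(2), of i] i g(3) by linarith
  then show "\<exists>g. continuous_on UNIV g \<and> integrable lebesgue g \<and> (\<integral>x. \<bar>f x - g x\<bar> \<partial>lebesgue) < e"
    using g by blast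
qed

lemma integrable_imp_L1_approximable:
  "integrable lebesgue f \<Longrightarrow> L1_approximable f"
proof (induct rule: integrable_induct)
  case (base A c)
  then show ?case by (rule L1_approximable_indicator)
next
  case (add f g)
  then show ?case by (rule L1_approximable_add)
next
  case (lim f s)
  then show ?case by (intro L1_approximable_limit[of s f]) auto
qed

section \<open>Kernel operators with shrinking support\<close>

locale L1_approximate_identity =
  fixes \<Omega> :: "'a::euclidean_space set" and K :: "nat \<Rightarrow> 'a \<Rightarrow> 'a \<Rightarrow> real"
    and B :: real and \<delta> :: "nat \<Rightarrow> real"
  assumes bounded_domain: "bounded \<Omega>" and sets_domain: "\<Omega> \<in> sets lebesgue"
    and nonneg: "\<And>n x y. 0 \<le> K n x y"
    and kernel_measurable: "\<And>n. (\<lambda>(x, y). K n x y) \<in> borel_measurable (lebesgue \<Otimes>\<^sub>M lebesgue)"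
    and bounded_kernel: "\<And>n x. x \<in> \<Omega> \<Longrightarrow> \<exists>C. \<forall>y. K n x y \<le> C"
    and B_nonneg: "0 \<le> B"
    and rows: "\<forall>\<^sub>F n in sequentially. \<forall>x\<in>\<Omega>. (\<integral>\<^sup>+y. K n x y \<partial>lebesgue) = 1"
    and columns: "\<forall>\<^sub>F n in sequentially. \<forall>y. (\<integral>\<^sup>+x\<in>\<Omega>. K n x y \<partial>lebesgue) \<le> ennreal B"
    and support: "\<forall>\<^sub>F n in sequentially. \<forall>x\<in>\<Omega>. \<forall>y. K n x y \<noteq> 0 \<longrightarrow> y \<in> \<Omega> \<and> dist x y \<le> \<delta> n"
    and support_radius: "\<delta> \<longlonglongrightarrow> 0"
begin

lemma integrable_kernel_mult:
  assumes "x \<in> \<Omega>" "integrable lebesgue h"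
  shows "integrable lebesgue (\<lambda>y. K n x y * h y)"
proof -
  obtain C where "\<forall>y. K n x y \<le> C"
    using bounded_kernel assms(1) by blast
  moreover have "K n x \<in> borel_measurable lebesgue"
    using measurable_Pair2[OF kernel_measurable[of n], of x] by simp
  ultimately show ?thesis
    using assms(2) nonneg by (intro integrable_mult_bounded_left[where C = C]) auto
qed

lemma kernel_row_integral:
  assumes "(\<integral>\<^sup>+y. K n x y \<partial>lebesgue) = 1"
  shows "integrable lebesgue (K n x)" "(\<integral>y. K n x y \<partial>lebesgue) = 1"
proof -
  have meas: "K n x \<in> borel_measurable lebesgue"
    using measurable_Pair2[OF kernel_measurable[of n], of x] by simp
  show "integrable lebesgue (K n x)"
    using assms nonneg by (intro integrableI_nonneg[OF meas]) auto
  show "(\<integral>y. K n x y \<partial>lebesgue) = 1"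
    using assms nonneg by (subst integral_eq_nn_integral[OF meas]) auto
qed

lemma operator_L1_bound:
  assumes column: "\<And>y. (\<integral>\<^sup>+x\<in>\<Omega>. K n x y \<partial>lebesgue) \<le> ennreal B"
    and h: "integrable lebesgue h"
  shows "set_integrable lebesgue \<Omega> (\<lambda>x. \<integral>y. K n x y * h y \<partial>lebesgue)"
    and "(LINT x:\<Omega>|lebesgue. \<bar>\<integral>y. K n x y * h y \<partial>lebesgue\<bar>) \<le> B * (\<integral>y. \<bar>h y\<bar> \<partial>lebesgue)"
proof -
  define Th where "Th x = indicator \<Omega> x * (\<integral>y. K n x y * h y \<partial>lebesgue)" for x
  have meas: "Th \<in> borel_measurable lebesgue"
    unfolding Th_def using kernel_measurable[of n] h sets_domain by measurable
  have "(\<integral>\<^sup>+x. \<bar>Th x\<bar> \<partial>lebesgue) = (\<integral>\<^sup>+x. \<bar>\<integral>y. indicator \<Omega> x * K n x y * h y \<partial>lebesgue\<bar> \<partial>lebesgue)"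
    unfolding Th_def by (simp add: mult.assoc)
  also have "\<dots> \<le> ennreal B * (\<integral>\<^sup>+y. \<bar>h y\<bar> \<partial>lebesgue)"
  proof (rule lebesgue_pair.nn_integral_integral_operator_le)
    show "(\<lambda>(x, y). indicator \<Omega> x * K n x y) \<in> borel_measurable (lebesgue \<Otimes>\<^sub>M lebesgue)"
      using kernel_measurable[of n] sets_domain by measurable
    show "(\<integral>\<^sup>+x. indicator \<Omega> x * K n x y \<partial>lebesgue) \<le> ennreal B" for y
      using column[of y] by (simp add: ennreal_mult' ennreal_indicator mult.commute)
  qed (use nonneg h in auto)
  also have "\<dots> = ennreal (B * (\<integral>y. \<bar>h y\<bar> \<partial>lebesgue))"
    using h B_nonneg by (simp add: nn_integral_eq_integral ennreal_mult)
  finally have bound: "(\<integral>\<^sup>+x. \<bar>Th x\<bar> \<partial>lebesgue) \<le> ennreal (B * (\<integral>y. \<bar>h y\<bar> \<partial>lebesgue))" .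
  then have "integrable lebesgue Th"
    using meas by (intro integrableI_bounded) (auto intro: le_less_trans)
  then show int: "set_integrable lebesgue \<Omega> (\<lambda>x. \<integral>y. K n x y * h y \<partial>lebesgue)"
    by (simp add: set_integrable_def Th_def[abs_def])
  have "ennreal (LINT x:\<Omega>|lebesgue. \<bar>\<integral>y. K n x y * h y \<partial>lebesgue\<bar>) = (\<integral>\<^sup>+x. \<bar>Th x\<bar> \<partial>lebesgue)"
    using set_integrable_abs[OF int]
    by (simp add: set_lebesgue_integral_def set_integrable_def nn_integral_eq_integral Th_def abs_mult)
  with bound have "ennreal (LINT x:\<Omega>|lebesgue. \<bar>\<integral>y. K n x y * h y \<partial>lebesgue\<bar>)
      \<le> ennreal (B * (\<integral>y. \<bar>h y\<bar> \<partial>lebesgue))"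
    by simp
  then show "(LINT x:\<Omega>|lebesgue. \<bar>\<integral>y. K n x y * h y \<partial>lebesgue\<bar>) \<le> B * (\<integral>y. \<bar>h y\<bar> \<partial>lebesgue)"
    using B_nonneg by (subst (asm) ennreal_le_iff) auto
qed

lemma operator_uniform_approx:
  assumes g: "continuous_on UNIV g" "integrable lebesgue g" and e: "0 < e"
  shows "\<forall>\<^sub>F n in sequentially. \<forall>x\<in>\<Omega>. \<bar>(\<integral>y. K n x y * g y \<partial>lebesgue) - g x\<bar> \<le> e"
proof -
  have "uniformly_continuous_on (closure \<Omega>) g"
    using bounded_domain g(1)
    by (intro compact_uniformly_continuous) (auto simp: compact_closure intro: continuous_on_subset)
  then obtain d where d: "0 < d"
    "\<And>x y. x \<in> closure \<Omega> \<Longrightarrow> y \<in> closure \<Omega> \<Longrightarrow> dist y x < d \<Longrightarrow> dist (g y) (g x) < e"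
    unfolding uniformly_continuous_on_def using e by metis
  have "\<forall>\<^sub>F n in sequentially. \<delta> n < d"
    using support_radius d(1) by (rule order_tendstoD)
  with rows support show ?thesis
  proof eventually_elim
    case (elim n)
    show ?case
    proof
      fix x assume x: "x \<in> \<Omega>"
      show "\<bar>(\<integral>y. K n x y * g y \<partial>lebesgue) - g x\<bar> \<le> e"
      proof (rule weighted_average_deviation)
        show "integrable lebesgue (K n x)" "(\<integral>y. K n x y \<partial>lebesgue) = 1"
          using kernel_row_integral elim x by auto
        show "integrable lebesgue (\<lambda>y. K n x y * g y)"
          using x g(2) by (rule integrable_kernel_mult)
        show "\<bar>g y - g x\<bar> \<le> e" if "K n x y \<noteq> 0" for y
          using that elim x d(2)[of x y] closure_subset
          by (force simp: dist_real_def dist_commute)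
      qed (rule nonneg)
    qed
  qed
qed

lemma lmeasurable_domain: "\<Omega> \<in> lmeasurable"
  using bounded_domain sets_domain by (rule bounded_set_imp_lmeasurable)

lemma set_integrable_domain:
  fixes h :: "'a \<Rightarrow> real"
  assumes "integrable lebesgue h" shows "set_integrable lebesgue \<Omega> h"
  unfolding set_integrable_def using sets_domain assms by (rule integrable_mult_indicator)

lemma set_integral_domain_const:
  "set_integrable lebesgue \<Omega> (\<lambda>_. c)" "(LINT x:\<Omega>|lebesgue. c) = c * measure lebesgue \<Omega>"
proof -
  show "set_integrable lebesgue \<Omega> (\<lambda>_. c)"
    using integrable_lmeasurable_indicator[OF lmeasurable_domain]
    by (simp add: set_integrable_def)
  show "(LINT x:\<Omega>|lebesgue. c) = c * measure lebesgue \<Omega>"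
    using lmeasurable_domain unfolding set_lebesgue_integral_def by (simp add: mult.commute)
qed

lemma operator_diff:
  assumes "x \<in> \<Omega>" "integrable lebesgue f" "integrable lebesgue g"
  shows "(\<integral>y. K n x y * f y \<partial>lebesgue) - (\<integral>y. K n x y * g y \<partial>lebesgue)
    = (\<integral>y. K n x y * (f y - g y) \<partial>lebesgue)"
  using integrable_kernel_mult[OF assms(1,2)] integrable_kernel_mult[OF assms(1,3)]
  by (simp add: right_diff_distrib flip: Bochner_Integration.integral_diff)

lemma operator_L1_error_le:
  assumes column: "\<And>y. (\<integral>\<^sup>+x\<in>\<Omega>. K n x y \<partial>lebesgue) \<le> ennreal B"
    and uniform: "\<forall>x\<in>\<Omega>. \<bar>(\<integral>y. K n x y * g y \<partial>lebesgue) - g x\<bar> \<le> e"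
    and f: "integrable lebesgue f" and g: "integrable lebesgue g"
  shows "(LINT x:\<Omega>|lebesgue. \<bar>(\<integral>y. K n x y * f y \<partial>lebesgue) - f x\<bar>)
      \<le> (B + 1) * (\<integral>x. \<bar>f x - g x\<bar> \<partial>lebesgue) + e * measure lebesgue \<Omega>"
proof -
  let ?T = "\<lambda>h x. \<integral>y. K n x y * h y \<partial>lebesgue"
  have fg: "integrable lebesgue (\<lambda>x. f x - g x)"
    using f g by auto
  have abs_fg: "set_integrable lebesgue \<Omega> (\<lambda>x. \<bar>f x - g x\<bar>)"
    using set_integrable_domain[OF fg] by (rule set_integrable_abs)
  note T_fg = operator_L1_bound[OF column fg]
  have "(LINT x:\<Omega>|lebesgue. \<bar>?T f x - f x\<bar>)
      \<le> (LINT x:\<Omega>|lebesgue. \<bar>?T (\<lambda>y. f y - g y) x\<bar> + e + \<bar>f x - g x\<bar>)"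
  proof (rule set_integral_mono)
    show "set_integrable lebesgue \<Omega> (\<lambda>x. \<bar>?T f x - f x\<bar>)"
      using operator_L1_bound(1)[OF column f] set_integrable_domain[OF f]
      by (intro set_integrable_abs) auto
    show "set_integrable lebesgue \<Omega> (\<lambda>x. \<bar>?T (\<lambda>y. f y - g y) x\<bar> + e + \<bar>f x - g x\<bar>)"
      using set_integrable_abs[OF T_fg(1)] abs_fg set_integral_domain_const(1)
      by (intro set_integral_add)
    show "\<bar>?T f x - f x\<bar> \<le> \<bar>?T (\<lambda>y. f y - g y) x\<bar> + e + \<bar>f x - g x\<bar>" if "x \<in> \<Omega>" for x
      using operator_diff[where n = n, OF that f g] uniform that by fastforce
  qed
  also have "\<dots> = (LINT x:\<Omega>|lebesgue. \<bar>?T (\<lambda>y. f y - g y) x\<bar>) + e * measure lebesgue \<Omega>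
      + (LINT x:\<Omega>|lebesgue. \<bar>f x - g x\<bar>)"
    using set_integrable_abs[OF T_fg(1)] abs_fg set_integral_domain_const
    by (simp add: set_integral_add(2))
  also have "(LINT x:\<Omega>|lebesgue. \<bar>f x - g x\<bar>) \<le> (\<integral>x. \<bar>f x - g x\<bar> \<partial>lebesgue)"
    using fg abs_fg unfolding set_lebesgue_integral_def set_integrable_def
    by (intro integral_mono) (auto simp: indicator_def)
  finally show ?thesis
    using T_fg(2) by (simp add: algebra_simps)
qed

theorem operator_tendsto_L1:
  assumes f: "integrable lebesgue f"
  shows "\<forall>\<^sub>F n in sequentially. set_integrable lebesgue \<Omega> (\<lambda>x. \<integral>y. K n x y * f y \<partial>lebesgue)"
    and "(\<lambda>n. LINT x:\<Omega>|lebesgue. \<bar>(\<integral>y. K n x y * f y \<partial>lebesgue) - f x\<bar>) \<longlonglongrightarrow> 0"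
proof -
  show "\<forall>\<^sub>F n in sequentially. set_integrable lebesgue \<Omega> (\<lambda>x. \<integral>y. K n x y * f y \<partial>lebesgue)"
    using columns by eventually_elim (use operator_L1_bound(1) f in blast)
  show "(\<lambda>n. LINT x:\<Omega>|lebesgue. \<bar>(\<integral>y. K n x y * f y \<partial>lebesgue) - f x\<bar>) \<longlonglongrightarrow> 0"
    unfolding tendsto_iff
  proof (intro allI impI)
    fix \<epsilon> :: real assume \<epsilon>: "0 < \<epsilon>"
    define m where "m = measure lebesgue \<Omega>"
    define e where "e = \<epsilon> / (2 * (m + 1))"
    have m: "0 \<le> m"
      by (simp add: m_def)
    have e: "0 < e" and em: "e * m < \<epsilon> / 2"
      using \<epsilon> m by (simp_all add: e_def field_simps)
    have "0 < \<epsilon> / (2 * (B + 1))"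
      using \<epsilon> B_nonneg by simp
    then obtain g where g: "continuous_on UNIV g" "integrable lebesgue g"
      "(\<integral>x. \<bar>f x - g x\<bar> \<partial>lebesgue) < \<epsilon> / (2 * (B + 1))"
      using integrable_imp_L1_approximable[OF f] unfolding L1_approximable_def by blast
    then have fg: "(B + 1) * (\<integral>x. \<bar>f x - g x\<bar> \<partial>lebesgue) < \<epsilon> / 2"
      using B_nonneg by (simp add: field_simps)
    from columns operator_uniform_approx[OF g(1,2) e]
    show "\<forall>\<^sub>F n in sequentially.
        dist (LINT x:\<Omega>|lebesgue. \<bar>(\<integral>y. K n x y * f y \<partial>lebesgue) - f x\<bar>) 0 < \<epsilon>"
    proof eventually_elim
      case (elim n)
      have "0 \<le> (LINT x:\<Omega>|lebesgue. \<bar>(\<integral>y. K n x y * f y \<partial>lebesgue) - f x\<bar>)"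
        by (simp add: set_lebesgue_integral_def)
      moreover have "(LINT x:\<Omega>|lebesgue. \<bar>(\<integral>y. K n x y * f y \<partial>lebesgue) - f x\<bar>)
          \<le> (B + 1) * (\<integral>x. \<bar>f x - g x\<bar> \<partial>lebesgue) + e * m"
        unfolding m_def using elim f g(2) by (intro operator_L1_error_le) auto
      ultimately show ?case
        using fg em by simp
    qed
  qed
qed

end

section \<open>The mollifier scaled by the distance to the boundary\<close>

lemma infdist_frontier_pos:
  fixes S :: "'a::euclidean_space set"
  assumes "open S" "bounded S" "x \<in> S"
  shows "0 < infdist x (frontier S)"
proof -
  have "frontier S \<noteq> {}"
    using assms not_bounded_UNIV frontier_eq_empty by blast
  moreover have "x \<notin> frontier S"
    using assms by (simp add: frontier_def interior_open)
  ultimately show ?thesis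
    by (simp add: infdist_pos_not_in_closed)
qed

lemma ball_infdist_frontier_subset:
  fixes S :: "'a::real_normed_vector set"
  assumes "x \<in> S"
  shows "ball x (infdist x (frontier S)) \<subseteq> S"
proof (rule ccontr)
  assume "\<not> ?thesis"
  then have "0 < infdist x (frontier S)"
    by (metis ball_eq_empty empty_subsetI not_less)
  then have "ball x (infdist x (frontier S)) \<inter> S \<noteq> {}"
    using assms by (metis IntI centre_in_ball empty_iff)
  with \<open>\<not> ?thesis\<close> obtain p where "p \<in> ball x (infdist x (frontier S))" "p \<in> frontier S"
    using connected_Int_frontier[of "ball x (infdist x (frontier S))" S] by auto
  then show False
    using infdist_le[of p "frontier S" x] by simp
qed

lemma infdist_frontier_le_diameter:
  fixes S :: "'a::euclidean_space set"
  assumes "bounded S" "x \<in> S"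
  shows "infdist x (frontier S) \<le> diameter (closure S)"
proof -
  obtain p where p: "p \<in> frontier S"
    using assms not_bounded_UNIV frontier_eq_empty by blast
  then have "infdist x (frontier S) \<le> dist x p"
    by (rule infdist_le)
  also have "\<dots> \<le> diameter (closure S)"
    using assms p closure_subset by (intro diameter_bounded_bound) (auto simp: frontier_def)
  finally show ?thesis .
qed

lemma nn_integral_lborel_scaled_reflection:
  fixes f :: "'a::euclidean_space \<Rightarrow> ennreal"
  assumes f: "f \<in> borel_measurable borel" and c: "0 < c"
  shows "(\<integral>\<^sup>+y. f (c *\<^sub>R (a - y)) \<partial>lborel) = ennreal ((1 / c) ^ DIM('a)) * (\<integral>\<^sup>+x. f x \<partial>lborel)"
proof -
  let ?T = "\<lambda>x::'a. a + (- 1 / c) *\<^sub>R x"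
  have "lborel = density (distr lborel borel ?T) (\<lambda>_. ennreal (\<bar>- 1 / c\<bar> ^ DIM('a)))"
    using lborel_affine[of "- 1 / c" a] c by simp
  then have "(\<integral>\<^sup>+y. f (c *\<^sub>R (a - y)) \<partial>lborel)
      = (\<integral>\<^sup>+y. f (c *\<^sub>R (a - y)) \<partial>density (distr lborel borel ?T) (\<lambda>_. ennreal (\<bar>- 1 / c\<bar> ^ DIM('a))))"
    by (rule arg_cong)
  also have "\<dots> = (\<integral>\<^sup>+y. ennreal (\<bar>- 1 / c\<bar> ^ DIM('a)) * f (c *\<^sub>R (a - y)) \<partial>distr lborel borel ?T)"
    using f by (intro nn_integral_density) auto
  also have "\<dots> = (\<integral>\<^sup>+x. ennreal (\<bar>- 1 / c\<bar> ^ DIM('a)) * f (c *\<^sub>R (a - ?T x)) \<partial>lborel)"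
    using f by (intro nn_integral_distr) auto
  also have "\<dots> = (\<integral>\<^sup>+x. ennreal ((1 / c) ^ DIM('a)) * f x \<partial>lborel)"
    using c by (simp add: algebra_simps)
  also have "\<dots> = ennreal ((1 / c) ^ DIM('a)) * (\<integral>\<^sup>+x. f x \<partial>lborel)"
    using f by (intro nn_integral_cmult) simp
  finally show ?thesis .
qed

lemma nn_integral_lborel_continuous_pos:
  fixes f :: "'a::euclidean_space \<Rightarrow> real"
  assumes f: "continuous_on UNIV f" "\<And>x. 0 \<le> f x" and a: "0 < f a"
  shows "0 < (\<integral>\<^sup>+x. f x \<partial>lborel)"
proof -
  obtain r where r: "0 < r" "\<And>x. dist x a < r \<Longrightarrow> dist (f x) (f a) < f a / 2"
    using f(1) a unfolding continuous_on_iff by (metis UNIV_I half_gt_zero)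
  have "emeasure lborel (ball a r) = ennreal (measure lborel (ball a r))"
    using emeasure_lborel_ball_finite[of a r] by (intro emeasure_eq_ennreal_measure) simp
  then have "0 < emeasure lborel (ball a r)"
    using content_ball_pos[OF r(1), of a] by simp
  then have "0 < ennreal (f a / 2) * emeasure lborel (ball a r)"
    using a by (simp add: ennreal_zero_less_mult_iff)
  also have "\<dots> = (\<integral>\<^sup>+x. ennreal (f a / 2) * indicator (ball a r) x \<partial>lborel)"
    by (simp add: nn_integral_cmult_indicator)
  also have "\<dots> \<le> (\<integral>\<^sup>+x. f x \<partial>lborel)"
  proof (rule nn_integral_mono)
    show "ennreal (f a / 2) * indicator (ball a r) x \<le> ennreal (f x)" for x
    proof (cases "x \<in> ball a r")
      case True
      then have "f a / 2 \<le> f x"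
        using r(2)[of x] by (auto simp: dist_real_def dist_commute abs_if split: if_splits)
      then show ?thesis
        using True by (simp add: ennreal_leI)
    qed simp
  qed
  finally show ?thesis .
qed

lemma smooth_on_imp_continuous_on:
  assumes "smooth_on S f" shows "continuous_on S f"
proof -
  obtain D :: "'a list \<Rightarrow> 'a \<Rightarrow> real" where D: "\<forall>x\<in>S. D [] x = f x"
    "\<forall>vs. \<forall>x\<in>S. (D vs has_derivative (\<lambda>h. D (h # vs) x)) (at x)"
    using assms unfolding smooth_on_def by blast
  have "continuous_on S (D [])"
    using D(2) has_derivative_continuous by (blast intro: continuous_at_imp_continuous_on)
  then show ?thesis using D(1) continuous_on_cong by blast
qed

locale variable_mollifier =
  fixes \<Omega> :: "'a::euclidean_space set" and \<rho> \<eta> :: "'a \<Rightarrow> real" and \<kappa> :: real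
  assumes open_domain: "open \<Omega>" and bounded_domain: "bounded \<Omega>"
    and \<rho>_cont: "continuous_on UNIV \<rho>"
    and \<rho>_range: "\<And>x. 0 \<le> \<rho> x \<and> \<rho> x \<le> 1"
    and \<rho>_zero: "\<And>x. \<rho> x = 0 \<longleftrightarrow> norm x \<ge> 1"
    and \<eta>_cont: "continuous_on \<Omega> \<eta>"
    and \<kappa>_pos: "0 < \<kappa>"
    and \<eta>_bounds: "\<And>x. x \<in> \<Omega> \<Longrightarrow>
      \<kappa> * infdist x (frontier \<Omega>) ^ 2 \<le> \<eta> x \<and> \<eta> x \<le> infdist x (frontier \<Omega>) ^ 2"
begin

abbreviation \<sigma> :: "'a \<Rightarrow> real" where
  "\<sigma> x \<equiv> infdist x (frontier \<Omega>)"

lemma \<sigma>_pos: "x \<in> \<Omega> \<Longrightarrow> 0 < \<sigma> x"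
  using open_domain bounded_domain by (rule infdist_frontier_pos)

lemma \<eta>_pos: "x \<in> \<Omega> \<Longrightarrow> 0 < \<eta> x"
proof -
  assume x: "x \<in> \<Omega>"
  then have "0 < \<kappa> * \<sigma> x ^ 2"
    using \<sigma>_pos[OF x] \<kappa>_pos by simp
  then show ?thesis
    using \<eta>_bounds[OF x] by linarith
qed

lemma \<rho>_borel[measurable]: "\<rho> \<in> borel_measurable borel"
  using \<rho>_cont by (rule borel_measurable_continuous_onI)

lemma integrable_\<rho>: "integrable lborel \<rho>"
proof (rule Bochner_Integration.integrable_bound[of _ "indicator (cball 0 1)"])
  show "integrable lborel (indicator (cball (0::'a) 1) :: 'a \<Rightarrow> real)"
    using emeasure_lborel_cball_finite by (intro integrable_real_indicator) auto
  show "AE y in lborel. norm (\<rho> y) \<le> norm (indicator (cball (0::'a) 1) y :: real)"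
  proof (intro AE_I2)
    fix y :: 'a
    show "norm (\<rho> y) \<le> norm (indicator (cball (0::'a) 1) y :: real)"
      using \<rho>_range[of y] \<rho>_zero[of y] by (cases "norm y \<le> 1") (auto simp: indicator_def)
  qed
qed simp

lemma M_rho_normalization: "0 < M_rho \<rho>" "(\<integral>\<^sup>+y. \<rho> y \<partial>lborel) = ennreal (1 / M_rho \<rho>)"
proof -
  have "(LINT y:ball 0 1|lebesgue. \<rho> y) = (\<integral>y. \<rho> y \<partial>lebesgue)"
    unfolding set_lebesgue_integral_def
  proof (intro Bochner_Integration.integral_cong)
    show "indicator (ball 0 1) y *\<^sub>R \<rho> y = \<rho> y" for y :: 'a
      using \<rho>_zero[of y] by (cases "norm y < 1") (auto simp: indicator_def)
  qed simp
  also have "\<dots> = (\<integral>y. \<rho> y \<partial>lborel)"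
    by (rule integral_completion) simp
  finally have I: "(\<integral>\<^sup>+y. \<rho> y \<partial>lborel) = ennreal (LINT y:ball 0 1|lebesgue. \<rho> y)"
    using integrable_\<rho> \<rho>_range by (simp add: nn_integral_eq_integral)
  have "0 < (\<integral>\<^sup>+y. \<rho> y \<partial>lborel)"
    using \<rho>_cont \<rho>_range \<rho>_zero[of 0]
    by (intro nn_integral_lborel_continuous_pos[of _ 0]) (auto simp: less_le)
  then have "0 < (LINT y:ball 0 1|lebesgue. \<rho> y)"
    using I by simp
  then show "0 < M_rho \<rho>" "(\<integral>\<^sup>+y. \<rho> y \<partial>lborel) = ennreal (1 / M_rho \<rho>)"
    using I by (simp_all add: M_rho_def)
qed

definition kernel :: "nat \<Rightarrow> 'a \<Rightarrow> 'a \<Rightarrow> real" where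
  "kernel n x y = (if x \<in> \<Omega> then C_n \<rho> \<eta> n x * \<rho> ((real n / \<eta> x) *\<^sub>R (x - y)) else 0)"

lemma T_n_eq_kernel:
  "x \<in> \<Omega> \<Longrightarrow> T_n \<rho> \<Omega> \<eta> n f x = (\<integral>y. kernel n x y * (indicator \<Omega> y * f y) \<partial>lebesgue)"
  unfolding T_n_def kernel_def set_lebesgue_integral_def
  by (simp add: mult_ac flip: integral_mult_right_zero)

lemma C_n_nonneg: "x \<in> \<Omega> \<Longrightarrow> 0 \<le> C_n \<rho> \<eta> n x"
  using \<eta>_pos[of x] M_rho_normalization(1) by (simp add: C_n_def)

lemma kernel_nonneg: "0 \<le> kernel n x y"
  using C_n_nonneg \<rho>_range by (simp add: kernel_def)

lemma kernel_le: "x \<in> \<Omega> \<Longrightarrow> kernel n x y \<le> C_n \<rho> \<eta> n x"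
  using C_n_nonneg \<rho>_range by (simp add: kernel_def mult_left_le)

lemma kernel_measurable: "(\<lambda>(x, y). kernel n x y) \<in> borel_measurable (lebesgue \<Otimes>\<^sub>M lebesgue)"
proof -
  txt \<open>\<open>\<eta>\<close> is arbitrary off \<open>\<Omega>\<close>; replacing it there by 1 does not change the kernel.\<close>
  define \<eta>' where "\<eta>' x = (if x \<in> \<Omega> then \<eta> x else 1)" for x
  have [measurable]: "\<eta>' \<in> borel_measurable borel"
    unfolding \<eta>'_def using open_domain \<eta>_cont
    by (intro borel_measurable_continuous_on_if) (auto intro: continuous_on_const)
  have [measurable]: "\<Omega> \<in> sets borel"
    using open_domain by simp
  have "(\<lambda>(x, y). kernel n x y)
      = (\<lambda>(x, y). if x \<in> \<Omega> then C_n \<rho> \<eta>' n x * \<rho> ((real n / \<eta>' x) *\<^sub>R (x - y)) else 0)"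
    by (auto simp: kernel_def C_n_def \<eta>'_def fun_eq_iff)
  also have "\<dots> \<in> borel_measurable (lborel \<Otimes>\<^sub>M lborel)"
    unfolding C_n_def by measurable
  finally show ?thesis
    by (rule borel_measurable_lebesgue_pair)
qed

lemma kernel_support:
  assumes "kernel n x y \<noteq> 0"
  shows "x \<in> \<Omega>" "dist x y < \<sigma> x ^ 2 / real n" "dist x y < diameter (closure \<Omega>) ^ 2 / real n"
proof -
  show x: "x \<in> \<Omega>"
    using assms by (cases "x \<in> \<Omega>") (auto simp: kernel_def)
  have "C_n \<rho> \<eta> 0 x = 0"
    by (simp add: C_n_def)
  then have n: "0 < real n"
    using assms x by (cases n) (auto simp: kernel_def)
  have "\<rho> ((real n / \<eta> x) *\<^sub>R (x - y)) \<noteq> 0"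
    using assms x by (auto simp: kernel_def)
  then have "real n / \<eta> x * dist x y < 1"
    using \<rho>_zero \<eta>_pos[OF x] n by (simp add: dist_norm not_le)
  then have "dist x y < \<eta> x / real n"
    using \<eta>_pos[OF x] n by (simp add: field_simps)
  also have "\<dots> \<le> \<sigma> x ^ 2 / real n"
    using \<eta>_bounds[OF x] n by (simp add: divide_right_mono)
  finally show "dist x y < \<sigma> x ^ 2 / real n" .
  also have "\<sigma> x ^ 2 \<le> diameter (closure \<Omega>) ^ 2"
    using infdist_frontier_le_diameter[OF bounded_domain x] infdist_nonneg by (intro power_mono) auto
  then have "\<sigma> x ^ 2 / real n \<le> diameter (closure \<Omega>) ^ 2 / real n"
    by (rule divide_right_mono) simp
  finally show "dist x y < diameter (closure \<Omega>) ^ 2 / real n" .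
qed

lemma kernel_support_comparable:
  assumes n: "2 * diameter (closure \<Omega>) < real n" and K: "kernel n x y \<noteq> 0"
  shows "y \<in> \<Omega>" "\<sigma> y / 2 \<le> \<sigma> x" "\<sigma> x \<le> 2 * \<sigma> y"
proof -
  have x: "x \<in> \<Omega>" and d: "dist x y < \<sigma> x ^ 2 / real n"
    using kernel_support[OF K] by auto
  have "\<sigma> x ^ 2 / real n \<le> \<sigma> x / 2"
    using infdist_frontier_le_diameter[OF bounded_domain x] \<sigma>_pos[OF x] n
    by (simp add: field_simps power2_eq_square mult_left_mono)
  with d have "dist x y < \<sigma> x / 2"
    by linarith
  then show "y \<in> \<Omega>"
    using ball_infdist_frontier_subset[OF x] \<sigma>_pos[OF x] by auto
  show "\<sigma> y / 2 \<le> \<sigma> x" "\<sigma> x \<le> 2 * \<sigma> y"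
    using infdist_triangle_abs[of x "frontier \<Omega>" y] \<open>dist x y < \<sigma> x / 2\<close> by linarith+
qed

lemma kernel_row_integral:
  assumes x: "x \<in> \<Omega>" and n: "0 < n"
  shows "(\<integral>\<^sup>+y. kernel n x y \<partial>lebesgue) = 1"
proof -
  define c where "c = real n / \<eta> x"
  have c: "0 < c"
    using \<eta>_pos[OF x] n by (simp add: c_def)
  have C: "0 \<le> C_n \<rho> \<eta> n x"
    using x by (rule C_n_nonneg)
  have "(\<integral>\<^sup>+y. kernel n x y \<partial>lebesgue) = (\<integral>\<^sup>+y. ennreal (C_n \<rho> \<eta> n x) * ennreal (\<rho> (c *\<^sub>R (x - y))) \<partial>lborel)"
    using x C \<rho>_range by (simp add: nn_integral_completion kernel_def c_def ennreal_mult)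
  also have "\<dots> = ennreal (C_n \<rho> \<eta> n x) * (\<integral>\<^sup>+y. \<rho> (c *\<^sub>R (x - y)) \<partial>lborel)"
    by (rule nn_integral_cmult) simp
  also have "\<dots> = ennreal (C_n \<rho> \<eta> n x) * (ennreal ((1 / c) ^ DIM('a)) * ennreal (1 / M_rho \<rho>))"
    using nn_integral_lborel_scaled_reflection[of "\<lambda>y. ennreal (\<rho> y)" c x] c M_rho_normalization(2)
    by simp
  also have "\<dots> = ennreal (C_n \<rho> \<eta> n x * ((1 / c) ^ DIM('a) * (1 / M_rho \<rho>)))"
  proof -
    have "0 \<le> (1 / c) ^ DIM('a)" "0 \<le> 1 / M_rho \<rho>"
      using c M_rho_normalization(1) by simp_all
    then show ?thesis
      using C by (simp only: ennreal_mult mult_nonneg_nonneg)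
  qed
  also have "C_n \<rho> \<eta> n x * ((1 / c) ^ DIM('a) * (1 / M_rho \<rho>)) = 1"
    using \<eta>_pos[OF x] n M_rho_normalization(1) by (simp add: C_n_def c_def power_divide)
  finally show ?thesis by simp
qed

definition column_bound :: real where
  "column_bound = M_rho \<rho> * (16 / \<kappa>) ^ DIM('a) * measure lebesgue (ball (0::'a) 1)"

lemma kernel_le_column_profile:
  assumes n: "2 * diameter (closure \<Omega>) < real n" and y: "y \<in> \<Omega>"
  shows "kernel n x y
    \<le> M_rho \<rho> * (4 * real n / (\<kappa> * \<sigma> y ^ 2)) ^ DIM('a) * indicator (ball y (4 * \<sigma> y ^ 2 / real n)) x"
proof (cases "kernel n x y = 0")
  case True
  then show ?thesis
    using M_rho_normalization(1) \<kappa>_pos by simp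
next
  case False
  have x: "x \<in> \<Omega>" and d: "dist x y < \<sigma> x ^ 2 / real n"
    and lower: "\<sigma> y / 2 \<le> \<sigma> x" and upper: "\<sigma> x \<le> 2 * \<sigma> y"
    using kernel_support[OF False] kernel_support_comparable[OF n False] by auto
  have n_pos: "0 < real n"
    using d by (cases "n = 0") auto
  have "\<sigma> x ^ 2 \<le> (2 * \<sigma> y) ^ 2"
    using upper \<sigma>_pos[OF x] by (intro power_mono) auto
  then have "\<sigma> x ^ 2 / real n \<le> 4 * \<sigma> y ^ 2 / real n"
    using n_pos by (simp add: divide_right_mono power_mult_distrib)
  then have ball: "x \<in> ball y (4 * \<sigma> y ^ 2 / real n)"
    using d by (simp add: dist_commute)
  have "\<kappa> * \<sigma> y ^ 2 / 4 = \<kappa> * (\<sigma> y / 2) ^ 2"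
    by (simp add: power_divide)
  also have "\<dots> \<le> \<kappa> * \<sigma> x ^ 2"
    using lower \<sigma>_pos[OF y] \<kappa>_pos by (intro mult_left_mono power_mono) auto
  also have "\<dots> \<le> \<eta> x"
    using \<eta>_bounds[OF x] by simp
  finally have "(\<kappa> * \<sigma> y ^ 2 / 4) ^ DIM('a) \<le> \<eta> x ^ DIM('a)"
    using \<kappa>_pos \<sigma>_pos[OF y] by (intro power_mono) auto
  then have "C_n \<rho> \<eta> n x \<le> M_rho \<rho> * real n ^ DIM('a) / (\<kappa> * \<sigma> y ^ 2 / 4) ^ DIM('a)"
    unfolding C_n_def using M_rho_normalization(1) \<kappa>_pos \<sigma>_pos[OF y] \<eta>_pos[OF x]
    by (intro divide_left_mono) auto
  also have "\<dots> = M_rho \<rho> * (4 * real n / (\<kappa> * \<sigma> y ^ 2)) ^ DIM('a)"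
    by (simp add: power_divide power_mult_distrib)
  finally have "C_n \<rho> \<eta> n x \<le> M_rho \<rho> * (4 * real n / (\<kappa> * \<sigma> y ^ 2)) ^ DIM('a)" .
  then show ?thesis
    using kernel_le[OF x, of n y] ball by simp
qed

lemma kernel_column_integral:
  assumes n: "2 * diameter (closure \<Omega>) < real n"
  shows "(\<integral>\<^sup>+x\<in>\<Omega>. kernel n x y \<partial>lebesgue) \<le> ennreal column_bound"
proof (cases "y \<in> \<Omega>")
  case False
  then have "kernel n x y = 0" for x
    using kernel_support_comparable(1)[OF n] by blast
  then show ?thesis by simp
next
  case y: True
  define r where "r = 4 * \<sigma> y ^ 2 / real n"
  define c where "c = M_rho \<rho> * (4 * real n / (\<kappa> * \<sigma> y ^ 2)) ^ DIM('a)"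
  have n_pos: "0 < real n"
    using n diameter_ge_0[of "closure \<Omega>"] bounded_domain by (simp add: bounded_closure)
  have r: "0 \<le> r" and c: "0 \<le> c"
    using n_pos M_rho_normalization(1) \<kappa>_pos by (simp_all add: r_def c_def)
  have "(\<integral>\<^sup>+x\<in>\<Omega>. kernel n x y \<partial>lebesgue) \<le> (\<integral>\<^sup>+x. ennreal c * indicator (ball y r) x \<partial>lebesgue)"
  proof (rule nn_integral_mono)
    fix x
    have "ennreal (kernel n x y) * indicator \<Omega> x \<le> ennreal (kernel n x y)"
      by (simp add: indicator_def)
    also have "\<dots> \<le> ennreal (c * indicator (ball y r) x)"
      using kernel_le_column_profile[OF n y, of x] by (simp add: ennreal_leI r_def c_def)
    also have "\<dots> = ennreal c * indicator (ball y r) x"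
      by (simp add: indicator_def)
    finally show "ennreal (kernel n x y) * indicator \<Omega> x \<le> ennreal c * indicator (ball y r) x" .
  qed
  also have "\<dots> = ennreal c * emeasure lebesgue (ball y r)"
    by (simp add: nn_integral_cmult_indicator)
  also have "\<dots> = ennreal (c * r ^ DIM('a) * measure lebesgue (ball (0::'a) 1))"
    using emeasure_lebesgue_ball_conv_unit_ball[OF r, of y] c r
    by (simp add: emeasure_eq_measure2 ennreal_mult mult.assoc)
  also have "c * r ^ DIM('a) = M_rho \<rho> * (16 / \<kappa>) ^ DIM('a)"
    using n_pos \<sigma>_pos[OF y] \<kappa>_pos
    by (simp add: c_def r_def mult.assoc flip: power_mult_distrib)
  finally show ?thesis
    by (simp add: column_bound_def)
qed

lemma approximate_identity:
  "L1_approximate_identity \<Omega> kernel column_bound (\<lambda>n. diameter (closure \<Omega>) ^ 2 / real n)"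
proof
  have large: "\<forall>\<^sub>F n in sequentially. 2 * diameter (closure \<Omega>) < real n"
    using filterlim_real_sequentially unfolding filterlim_at_top_dense by blast
  have pos: "\<forall>\<^sub>F n in sequentially. 0 < n"
    using eventually_gt_at_top by blast
  show "bounded \<Omega>" by (rule bounded_domain)
  show "\<Omega> \<in> sets lebesgue" using open_domain by simp
  show "0 \<le> kernel n x y" for n x y by (rule kernel_nonneg)
  show "(\<lambda>(x, y). kernel n x y) \<in> borel_measurable (lebesgue \<Otimes>\<^sub>M lebesgue)" for n
    by (rule kernel_measurable)
  show "\<exists>C. \<forall>y. kernel n x y \<le> C" if "x \<in> \<Omega>" for n x
    using kernel_le[OF that] by blast
  show "0 \<le> column_bound"
    using M_rho_normalization(1) \<kappa>_pos by (simp add: column_bound_def)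
  show "\<forall>\<^sub>F n in sequentially. \<forall>x\<in>\<Omega>. (\<integral>\<^sup>+y. kernel n x y \<partial>lebesgue) = 1"
    using pos by eventually_elim (simp add: kernel_row_integral)
  show "\<forall>\<^sub>F n in sequentially. \<forall>y. (\<integral>\<^sup>+x\<in>\<Omega>. kernel n x y \<partial>lebesgue) \<le> ennreal column_bound"
    using large by eventually_elim (simp add: kernel_column_integral)
  show "\<forall>\<^sub>F n in sequentially. \<forall>x\<in>\<Omega>. \<forall>y. kernel n x y \<noteq> 0 \<longrightarrow>
      y \<in> \<Omega> \<and> dist x y \<le> diameter (closure \<Omega>) ^ 2 / real n"
    using large by eventually_elim
      (use kernel_support(3) kernel_support_comparable(1) in \<open>blast intro: less_imp_le\<close>)
  show "(\<lambda>n. diameter (closure \<Omega>) ^ 2 / real n) \<longlonglongrightarrow> 0"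
    by (rule lim_const_over_n)
qed

end

theorem proposition5p4:
  fixes \<Omega> :: "'a::euclidean_space set"
    and \<rho> \<eta> f :: "'a \<Rightarrow> real"
    and \<kappa> :: real
  assumes \<Omega>_open: "open \<Omega>" and \<Omega>_bdd: "bounded \<Omega>"
    and \<rho>_smooth: "smooth_on UNIV \<rho>"
    and \<rho>_supp: "compact (closure {x. \<rho> x \<noteq> 0})"
    and \<rho>_range: "\<And>x. 0 \<le> \<rho> x \<and> \<rho> x \<le> 1"
    and \<rho>_zero: "\<And>x. \<rho> x = 0 \<longleftrightarrow> norm x \<ge> 1"
    and \<rho>_radial: "\<And>x y. norm x = norm y \<Longrightarrow> \<rho> x = \<rho> y"
    and \<rho>_half: "\<And>x z. norm x < 1/2 \<Longrightarrow> norm z = 1/2 \<Longrightarrow> \<rho> x \<ge> \<rho> z"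
    and \<eta>_smooth: "smooth_on \<Omega> \<eta>"
    and \<kappa>: "0 < \<kappa>" "\<kappa> < 1"
    and \<eta>_bounds: "\<And>x. x \<in> \<Omega> \<Longrightarrow>
        \<kappa> * infdist x (frontier \<Omega>) ^ 2 \<le> \<eta> x \<and> \<eta> x \<le> infdist x (frontier \<Omega>) ^ 2"
    and f_L1: "integrable (lebesgue_on \<Omega>) f"
  shows "(\<forall>\<^sub>F n in sequentially. integrable (lebesgue_on \<Omega>) (T_n \<rho> \<Omega> \<eta> n f)) \<and>
         (\<lambda>n. LINT x : \<Omega> | lebesgue. \<bar>T_n \<rho> \<Omega> \<eta> n f x - f x\<bar>) \<longlonglongrightarrow> 0"
proof -
  interpret M: variable_mollifier \<Omega> \<rho> \<eta> \<kappa>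
    using \<Omega>_open \<Omega>_bdd \<rho>_range \<rho>_zero \<kappa>(1) \<eta>_bounds
      smooth_on_imp_continuous_on[OF \<rho>_smooth] smooth_on_imp_continuous_on[OF \<eta>_smooth]
    by unfold_locales auto
  interpret A: L1_approximate_identity \<Omega> M.kernel M.column_bound
      "\<lambda>n. diameter (closure \<Omega>) ^ 2 / real n"
    by (rule M.approximate_identity)
  define f\<^sub>0 where "f\<^sub>0 y = indicator \<Omega> y * f y" for y
  have \<Omega>_sets: "\<Omega> \<in> sets lebesgue"
    using \<Omega>_open by simp
  have f\<^sub>0: "integrable lebesgue f\<^sub>0"
    using f_L1 \<Omega>_sets by (simp add: f\<^sub>0_def[abs_def] integrable_restrict_space)
  have T_eq: "T_n \<rho> \<Omega> \<eta> n f x = (\<integral>y. M.kernel n x y * f\<^sub>0 y \<partial>lebesgue)" if "x \<in> \<Omega>" for n x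
    using that by (simp add: M.T_n_eq_kernel f\<^sub>0_def)
  have "\<forall>\<^sub>F n in sequentially. integrable (lebesgue_on \<Omega>) (T_n \<rho> \<Omega> \<eta> n f)"
    using A.operator_tendsto_L1(1)[OF f\<^sub>0]
    by eventually_elim
      (simp add: \<Omega>_sets T_eq set_integrable_eq[symmetric] cong: set_integrable_cong)
  moreover have "(LINT x:\<Omega>|lebesgue. \<bar>T_n \<rho> \<Omega> \<eta> n f x - f x\<bar>)
      = (LINT x:\<Omega>|lebesgue. \<bar>(\<integral>y. M.kernel n x y * f\<^sub>0 y \<partial>lebesgue) - f\<^sub>0 x\<bar>)" for n
    using \<Omega>_sets by (rule set_lebesgue_integral_cong) (simp add: T_eq f\<^sub>0_def)
  ultimately show ?thesis
    using A.operator_tendsto_L1(2)[OF f\<^sub>0] by simp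
qed

end
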